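(* Let $M=\mathbb{R}_{\max}$ and $R=s(M)$ be its symmetrization hyperfield. Let $f\in M[x_1,\dots,x_n]$ be a polynomial written as a sum $f=\sum_{i=1}^k m_i$ of $k\ge1$ monomials $m_i=c_iX^{I_i}$ with $c_i\in\mathbb{R}$ and pairwise distinct multi-indices $I_i\in\mathbb{N}^n$. For each $i$ let \[\tilde f_{\hat i}:=\sum_{j\neq i}(c_j,1)X^{I_j}+(c_i,-1)X^{I_i}\in R[x_1,\dots,x_n],\] let $V(\tilde f_{\hat i}):=\{z\in R^n\mid 0_R\in\tilde f_{\hat i}(z)\}$ and $HV(f):=\bigcup_{i=1}^kV(\tilde f_{\hat i})$. Let $\varphi=s^n:M^n\to R^n$ be the coordinatewise map $a\mapsto(a,1)$ (with $-\infty\mapsto 0_R$). Then $\varphi(\operatorname{trop}(V(f)))=HV(f)\cap\operatorname{Im}(\varphi)$; in particular $\varphi$ restricts to a bijection $\operatorname{trop}(V(f))\to HV(f)\cap\operatorname{Im}(\varphi)$.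
   Context: $\mathbb{R}_{\max}=(\mathbb{R}\cup\{-\infty\},\max,+)$ is the tropical semifield: its "addition" is $\max$ (zero element $0_M=-\infty$) and its "multiplication" is ordinary addition (unit $0$). For a monomial $m=cX^I$ and $a\in M^n$, $m(a)=c+\sum_l I_l a_l$ (ordinary arithmetic, with $-\infty$ absorbing). $\operatorname{trop}(V(f))$ is the set of $a\in M^n$ such that the value $\max_i m_i(a)$ is either $-\infty$ or is attained by at least two distinct indices $i$. The symmetrization $R=s(M)$ has elements $(t,1)$, $(t,-1)$ for $t\in\mathbb{R}$ together with $0_R=(-\infty,1)=(-\infty,-1)$; write $|(t,p)|=t$. Its hyperaddition is: for $x,y\in R$, $x+y=\{x\}$ if $|x|>|y|$ or $x=y$; $x+y=\{y\}$ if $|x|<|y|$; and if $|x|=|y|$ with opposite signs, $x+y=\{(t,\pm1)\mid t\le|x|\}$ (including $0_R$). Multiplication is $(t,p)(u,q)=(t+u,pq)$ with $0_R$ absorbing. $R$ is a hyperfield. For a polynomial $g=\sum_I a_IX^I$ over $R$ (finite formal sum, no repeated multi-index) and $z\in R^n$, the evaluation $g(z)$ is the subset $\sum_I a_Iz^I\subseteq R$ computed with the hyperaddition (sums of sets as $A+B=\bigcup_{a\in A,b\in B}a+b$). *)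

theory Defs
  imports "HOL-Library.Extended_Real"
begin

text \<open>An element of M is None (= -infinity) or Some t with t real.
  A point of M^n is a list of length n.\<close>
type_synonym tropM = "real option"

text \<open>A monomial c X^I over M: a pair (c, I) with c real and I a multi-index
  (list of natural numbers of length n).\<close>
type_synonym monoM = "real \<times> nat list"

text \<open>m(a) = c + sum_l I_l a_l, with -infinity absorbing; a factor with exponent
  I_l = 0 is the tropical unit (X_l^0 = 1), so it contributes nothing.\<close>
definition mono_eval :: "monoM \<Rightarrow> tropM list \<Rightarrow> tropM" where
  "mono_eval m a =
     (if \<forall>l < length (snd m). 0 < snd m ! l \<longrightarrow> a ! l \<noteq> None
      then Some (fst m + (\<Sum>l<length (snd m). (if snd m ! l = 0 then 0
                   else real (snd m ! l) * the (a ! l))))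
      else None)"

definition tle :: "tropM \<Rightarrow> tropM \<Rightarrow> bool" where
  "tle x y = (case x of None \<Rightarrow> True | Some s \<Rightarrow> (case y of None \<Rightarrow> False | Some t \<Rightarrow> s \<le> t))"

text \<open>trop(V(f)) for f = sum of the monomials in the list ms (n variables):
  points a in M^n such that max_i m_i(a) is -infinity or attained at two distinct indices.\<close>
definition tropV :: "nat \<Rightarrow> monoM list \<Rightarrow> tropM list set" where
  "tropV n ms = {a. length a = n \<and>
      ((\<forall>i < length ms. mono_eval (ms ! i) a = None) \<or>
       (\<exists>i < length ms. \<exists>j < length ms. i \<noteq> j \<and>
          mono_eval (ms ! i) a = mono_eval (ms ! j) a \<and>
          (\<forall>l < length ms. tle (mono_eval (ms ! l) a) (mono_eval (ms ! i) a))))}"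

text \<open>None = 0_R; Some (t, True) = (t, 1); Some (t, False) = (t, -1).\<close>
type_synonym symR = "(real \<times> bool) option"

definition rzero :: symR where "rzero = None"
definition rone :: symR where "rone = Some (0, True)"

definition rabs :: "symR \<Rightarrow> ereal" where
  "rabs x = (case x of None \<Rightarrow> -\<infinity> | Some (t, _) \<Rightarrow> ereal t)"

text \<open>Hyperaddition. In the last case |x| = |y| and x \<noteq> y, i.e. opposite signs;
  the result is {(t, +-1) | t \<le> |x|} together with 0_R.\<close>
definition hadd :: "symR \<Rightarrow> symR \<Rightarrow> symR set" where
  "hadd x y = (if rabs x > rabs y \<or> x = y then {x}
               else if rabs x < rabs y then {y}
               else {z. rabs z \<le> rabs x})"

definition hset_add :: "symR set \<Rightarrow> symR set \<Rightarrow> symR set" where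
  "hset_add A B = (\<Union>a\<in>A. \<Union>b\<in>B. hadd a b)"

fun rmult :: "symR \<Rightarrow> symR \<Rightarrow> symR" where
  "rmult (Some (t, p)) (Some (u, q)) = Some (t + u, p = q)"
| "rmult _ _ = None"

fun rpow :: "symR \<Rightarrow> nat \<Rightarrow> symR" where
  "rpow x 0 = rone"
| "rpow x (Suc k) = rmult x (rpow x k)"

definition rmono_eval :: "symR \<times> nat list \<Rightarrow> symR list \<Rightarrow> symR" where
  "rmono_eval m z = foldr (\<lambda>l acc. rmult (rpow (z ! l) (snd m ! l)) acc)
                         [0..<length (snd m)] (fst m)"

text \<open>Evaluation g(z) of a polynomial over R (list of monomials) as a subset of R,
  computed with the hyperaddition (0_R is neutral: 0_R + x = {x}).\<close>
definition reval :: "(symR \<times> nat list) list \<Rightarrow> symR list \<Rightarrow> symR set" where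
  "reval g z = foldr (\<lambda>m S. hset_add {rmono_eval m z} S) g {rzero}"

definition RV :: "nat \<Rightarrow> (symR \<times> nat list) list \<Rightarrow> symR list set" where
  "RV n g = {z. length z = n \<and> rzero \<in> reval g z}"

definition ftilde :: "monoM list \<Rightarrow> nat \<Rightarrow> (symR \<times> nat list) list" where
  "ftilde ms i = map (\<lambda>j. (Some (fst (ms ! j), j \<noteq> i), snd (ms ! j))) [0..<length ms]"

definition HV :: "nat \<Rightarrow> monoM list \<Rightarrow> symR list set" where
  "HV n ms = (\<Union>i<length ms. RV n (ftilde ms i))"

definition sM :: "tropM \<Rightarrow> symR" where
  "sM a = (case a of None \<Rightarrow> rzero | Some t \<Rightarrow> Some (t, True))"

definition phi :: "tropM list \<Rightarrow> symR list" where
  "phi a = map sM a"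

end

theory Submission
  imports Defs
begin

text \<open>Evaluating \<open>f~_i\<close> at \<open>\<phi>(a)\<close> produces the hypersum of the values \<open>m_j(a)\<close>, each
  lifted to \<open>R\<close> with sign \<open>+1\<close> except the \<open>i\<close>-th one, which gets sign \<open>-1\<close>. Such a
  hypersum contains \<open>0_R\<close> exactly when all terms vanish or the largest absolute value is
  attained by two different terms; as different terms of equal absolute value must have
  opposite signs, one of them is the \<open>i\<close>-th. Hence \<open>\<phi>(a) \<in> V(f~_i)\<close> says that \<open>max_j m_j(a)\<close>
  is \<open>-\<infinity>\<close> or is attained at \<open>i\<close> and at another index, and the union over \<open>i\<close> is
  \<open>trop(V(f))\<close>. Injectivity of \<open>\<phi>\<close> gives the bijection.\<close>

definition signed :: "bool \<Rightarrow> tropM \<Rightarrow> symR" where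
  "signed p e = map_option (\<lambda>t. (t, p)) e"

definition trop_ereal :: "tropM \<Rightarrow> ereal" where
  "trop_ereal e = (case e of None \<Rightarrow> -\<infinity> | Some t \<Rightarrow> ereal t)"

lemma trop_ereal_inject: "trop_ereal e = trop_ereal e' \<longleftrightarrow> e = e'"
  by (cases e; cases e') (auto simp: trop_ereal_def)

lemma tle_iff_trop_ereal: "tle x y \<longleftrightarrow> trop_ereal x \<le> trop_ereal y"
  by (cases x; cases y) (auto simp: tle_def trop_ereal_def)

lemma tle_None_iff: "tle x None \<longleftrightarrow> x = None"
  by (cases x) (auto simp: tle_def)

lemma rabs_signed: "rabs (signed p e) = trop_ereal e"
  by (cases e) (auto simp: rabs_def signed_def trop_ereal_def)

lemma signed_eq_rzero_iff: "signed p e = rzero \<longleftrightarrow> e = None"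
  by (simp add: signed_def rzero_def)

lemma signed_eq_signed_iff: "signed p e = signed q e' \<longleftrightarrow> e = e' \<and> (e = None \<or> p = q)"
  by (cases e; cases e') (auto simp: signed_def)

lemma inj_phi: "inj phi"
proof -
  have "inj sM" by (rule injI) (auto simp: sM_def rzero_def split: option.splits)
  then show ?thesis unfolding phi_def by (rule inj_mapI)
qed

section \<open>Monomials at lifted points\<close>

lemma rpow_sM:
  "rpow (sM x) k = (if k = 0 then rone else map_option (\<lambda>t. (real k * t, True)) x)"
  by (induction k) (auto simp: sM_def rone_def rzero_def algebra_simps split: option.splits)

lemma rmult_rone [simp]: "rmult rone x = x"
  by (cases x) (auto simp: rone_def)

lemma foldr_rpow_phi:
  assumes "\<forall>l\<in>set L. l < length a" "distinct L"
  shows "foldr (\<lambda>l acc. rmult (rpow (phi a ! l) (I ! l)) acc) L (Some (c, p)) =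
    (if \<forall>l\<in>set L. 0 < I ! l \<longrightarrow> a ! l \<noteq> None
     then Some (c + (\<Sum>l\<in>set L. if I ! l = 0 then 0 else real (I ! l) * the (a ! l)), p)
     else None)"
  using assms
proof (induction L)
  case (Cons l L)
  then have "phi a ! l = sM (a ! l)" "l \<notin> set L" by (simp_all add: phi_def)
  with Cons show ?case
    by (cases "I ! l = 0"; cases "a ! l") (auto simp: rpow_sM algebra_simps)
qed simp

lemma rmono_eval_phi:
  assumes "length I = length a"
  shows "rmono_eval (Some (c, p), I) (phi a) = signed p (mono_eval (c, I) a)"
proof -
  have "set [0..<length I] = {..<length I}" by auto
  then show ?thesis
    using foldr_rpow_phi[of "[0..<length I]" a I c p] assms
    unfolding rmono_eval_def mono_eval_def signed_def snd_conv fst_conv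
    by (auto simp del: upt_Suc)
qed

section \<open>Iterated hyperaddition\<close>

definition hsum :: "symR list \<Rightarrow> symR set" where
  "hsum vs = foldr (\<lambda>v S. hset_add {v} S) vs {rzero}"

lemma hsum_Nil [simp]: "hsum [] = {rzero}"
  by (simp add: hsum_def)

lemma hsum_Cons [simp]: "hsum (u # vs) = hset_add {u} (hsum vs)"
  by (simp add: hsum_def)

lemma reval_eq_hsum: "reval g z = hsum (map (\<lambda>m. rmono_eval m z) g)"
  by (simp add: reval_def hsum_def foldr_map comp_def)

fun rneg :: "symR \<Rightarrow> symR" where
  "rneg None = None"
| "rneg (Some (t, p)) = Some (t, \<not> p)"

lemma rabs_rneg [simp]: "rabs (rneg u) = rabs u"
  by (cases u rule: rneg.cases) (auto simp: rabs_def)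

lemma rabs_rzero [simp]: "rabs rzero = -\<infinity>"
  by (simp add: rabs_def rzero_def)

lemma rabs_eq_rzero_iff: "rabs x = -\<infinity> \<longleftrightarrow> x = rzero"
  by (auto simp: rabs_def rzero_def split: option.splits)

lemma hadd_rneg: "u \<noteq> rzero \<Longrightarrow> hadd u (rneg u) = {z. rabs z \<le> rabs u}"
  by (cases u rule: rneg.cases) (simp_all add: hadd_def rabs_def rzero_def)

lemma hset_add_ball_absorb:
  assumes "rabs u \<le> r"
  shows "hset_add {u} {z. rabs z \<le> r} = {z. rabs z \<le> r}"
proof (intro equalityI subsetI)
  fix z assume "z \<in> hset_add {u} {z. rabs z \<le> r}"
  then show "z \<in> {z. rabs z \<le> r}"
    using assms by (auto simp: hset_add_def hadd_def split: if_splits)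
next
  fix z assume z: "z \<in> {z. rabs z \<le> r}"
  show "z \<in> hset_add {u} {z. rabs z \<le> r}"
  proof (cases "rabs u < rabs z")
    case True
    then have "hadd u z = {z}" by (auto simp: hadd_def)
    with z show ?thesis by (auto simp: hset_add_def)
  next
    case False
    have "z \<in> hadd u (rneg u)"
    proof (cases "u = rzero")
      case True
      with False have "z = rzero" by (simp add: rabs_eq_rzero_iff)
      with \<open>u = rzero\<close> show ?thesis by (simp add: hadd_def rzero_def)
    next
      case False
      with \<open>\<not> rabs u < rabs z\<close> show ?thesis by (simp add: hadd_rneg)
    qed
    moreover have "rneg u \<in> {z. rabs z \<le> r}" using assms by simp
    ultimately show ?thesis unfolding hset_add_def by blast
  qed
qed

lemma hset_add_ball_dominated:
  assumes "r < rabs u"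
  shows "hset_add {u} {z. rabs z \<le> r} = {u}"
proof -
  have "hadd u b = {u}" if "rabs b \<le> r" for b
    using le_less_trans[OF that assms] by (simp add: hadd_def)
  then have "hset_add {u} {z. rabs z \<le> r} = (\<Union>b\<in>{z. rabs z \<le> r}. {u})"
    by (simp add: hset_add_def)
  also have "\<dots> = {u}"
    by (auto intro!: exI[of _ rzero])
  finally show ?thesis .
qed

lemma hsum_cases:
  obtains (dominant) v where "hsum vs = {v}" "v = rzero \<or> v \<in> set vs"
      "\<forall>w\<in>set vs. rabs w < rabs v \<or> w = v"
  | (tie) x y where "x \<in> set vs" "y \<in> set vs" "x \<noteq> y" "rabs x = rabs y"
      "\<forall>w\<in>set vs. rabs w \<le> rabs x" "hsum vs = {z. rabs z \<le> rabs x}"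
proof (induction vs arbitrary: thesis)
  case Nil
  then show ?case by simp
next
  case (Cons u vs)
  show ?case
  proof (rule Cons.IH)
    fix v assume v: "hsum vs = {v}" "v = rzero \<or> v \<in> set vs"
      "\<forall>w\<in>set vs. rabs w < rabs v \<or> w = v"
    then have sum: "hsum (u # vs) = hadd u v" by (simp add: hset_add_def)
    consider "rabs v < rabs u \<or> u = v" | "rabs u < rabs v" | "rabs u = rabs v" "u \<noteq> v"
      using linorder_less_linear[of "rabs u" "rabs v"] by blast
    then show ?thesis
    proof cases
      case 1
      then have "hsum (u # vs) = {u}" using sum by (auto simp: hadd_def)
      moreover have "\<forall>w\<in>set (u # vs). rabs w < rabs u \<or> w = u"
        using 1 v(3) by (auto intro: less_trans)
      ultimately show ?thesis by (intro Cons.prems(1)[of u]) auto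
    next
      case 2
      then have "hsum (u # vs) = {v}" using sum by (auto simp: hadd_def)
      moreover have "\<forall>w\<in>set (u # vs). rabs w < rabs v \<or> w = v"
        using 2 v(3) by auto
      ultimately show ?thesis using v(2) by (intro Cons.prems(1)[of v]) auto
    next
      case 3
      then have "hsum (u # vs) = {z. rabs z \<le> rabs u}" using sum by (simp add: hadd_def)
      moreover have "\<forall>w\<in>set (u # vs). rabs w \<le> rabs u"
        using 3 v(3) by (auto simp: order_le_less)
      moreover have "v \<in> set vs"
        using 3 v(2) rabs_eq_rzero_iff by fastforce
      ultimately show ?thesis using 3 by (intro Cons.prems(2)[of u v]) simp_all
    qed
  next
    fix x y assume xy: "x \<in> set vs" "y \<in> set vs" "x \<noteq> y" "rabs x = rabs y"
      "\<forall>w\<in>set vs. rabs w \<le> rabs x" "hsum vs = {z. rabs z \<le> rabs x}"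
    show ?thesis
    proof (cases "rabs u \<le> rabs x")
      case True
      then have "hsum (u # vs) = {z. rabs z \<le> rabs x}"
        using xy(6) by (simp add: hset_add_ball_absorb)
      with True xy show ?thesis by (intro Cons.prems(2)[of x y]) simp_all
    next
      case False
      then have "hsum (u # vs) = {u}" using xy(6) by (simp add: hset_add_ball_dominated)
      moreover have "\<forall>w\<in>set (u # vs). rabs w < rabs u \<or> w = u"
        using False xy(5) le_less_trans by auto
      ultimately show ?thesis by (intro Cons.prems(1)[of u]) auto
    qed
  qed
qed

lemma rzero_mem_hsum_iff:
  "rzero \<in> hsum vs \<longleftrightarrow>
   (\<forall>w\<in>set vs. w = rzero) \<or>
   (\<exists>x\<in>set vs. \<exists>y\<in>set vs. x \<noteq> y \<and> rabs x = rabs y \<and> (\<forall>w\<in>set vs. rabs w \<le> rabs x))"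
proof (cases vs rule: hsum_cases)
  case (dominant v)
  show ?thesis
  proof (cases "v = rzero")
    case True
    with dominant show ?thesis by auto
  next
    case False
    then have "v \<in> set vs" using dominant(2) by simp
    then have "\<not> (rabs x = rabs y \<and> (\<forall>w\<in>set vs. rabs w \<le> rabs x))"
      if "x \<in> set vs" "y \<in> set vs" "x \<noteq> y" for x y
      using dominant(3) that by (metis not_le)
    with False dominant(1) \<open>v \<in> set vs\<close> show ?thesis by auto
  qed
next
  case (tie x y)
  then have "rzero \<in> hsum vs" by simp
  moreover have "\<exists>x\<in>set vs. \<exists>y\<in>set vs. x \<noteq> y \<and> rabs x = rabs y \<and> (\<forall>w\<in>set vs. rabs w \<le> rabs x)"
    using tie by (intro bexI[of _ x] bexI[of _ y]) auto
  ultimately show ?thesis by simp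
qed

section \<open>The zero locus of \<open>f~_i\<close> on the image of \<open>\<phi>\<close>\<close>

definition max_tie_at :: "monoM list \<Rightarrow> tropM list \<Rightarrow> nat \<Rightarrow> bool" where
  "max_tie_at ms a i \<longleftrightarrow> mono_eval (ms ! i) a \<noteq> None \<and>
     (\<forall>l<length ms. tle (mono_eval (ms ! l) a) (mono_eval (ms ! i) a)) \<and>
     (\<exists>j<length ms. j \<noteq> i \<and> mono_eval (ms ! j) a = mono_eval (ms ! i) a)"

lemma reval_ftilde_phi:
  assumes "\<forall>j < length ms. length (snd (ms ! j)) = length a"
  shows "reval (ftilde ms i) (phi a) =
    hsum (map (\<lambda>j. signed (j \<noteq> i) (mono_eval (ms ! j) a)) [0..<length ms])"
  unfolding reval_eq_hsum ftilde_def map_map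
proof (intro arg_cong[where f = hsum] map_cong refl)
  fix j assume "j \<in> set [0..<length ms]"
  with assms show "((\<lambda>m. rmono_eval m (phi a)) \<circ> (\<lambda>j. (Some (fst (ms ! j), j \<noteq> i), snd (ms ! j)))) j =
      signed (j \<noteq> i) (mono_eval (ms ! j) a)"
    using rmono_eval_phi[of "snd (ms ! j)" a "fst (ms ! j)" "j \<noteq> i"] by simp
qed

lemma rzero_mem_reval_ftilde_phi_iff:
  assumes "\<forall>j < length ms. length (snd (ms ! j)) = length a" "i < length ms"
  shows "rzero \<in> reval (ftilde ms i) (phi a) \<longleftrightarrow>
    (\<forall>j<length ms. mono_eval (ms ! j) a = None) \<or> max_tie_at ms a i"
proof -
  define e where "e j = mono_eval (ms ! j) a" for j
  define vs where "vs = map (\<lambda>j. signed (j \<noteq> i) (e j)) [0..<length ms]"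
  have set_vs: "set vs = (\<lambda>j. signed (j \<noteq> i) (e j)) ` {..<length ms}"
    unfolding vs_def by auto
  have "rzero \<in> reval (ftilde ms i) (phi a) \<longleftrightarrow> rzero \<in> hsum vs"
    using reval_ftilde_phi[OF assms(1)] unfolding vs_def e_def by simp
  moreover have "(\<forall>w\<in>set vs. w = rzero) \<longleftrightarrow> (\<forall>j<length ms. mono_eval (ms ! j) a = None)"
    unfolding set_vs e_def by (auto simp: signed_eq_rzero_iff)
  moreover have "(\<exists>x\<in>set vs. \<exists>y\<in>set vs. x \<noteq> y \<and> rabs x = rabs y \<and> (\<forall>w\<in>set vs. rabs w \<le> rabs x))
      \<longleftrightarrow> max_tie_at ms a i"
  proof
    assume "\<exists>x\<in>set vs. \<exists>y\<in>set vs. x \<noteq> y \<and> rabs x = rabs y \<and> (\<forall>w\<in>set vs. rabs w \<le> rabs x)"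
    then obtain j1 j2 where j: "j1 < length ms" "j2 < length ms"
      "signed (j1 \<noteq> i) (e j1) \<noteq> signed (j2 \<noteq> i) (e j2)" "e j1 = e j2"
      "\<forall>l<length ms. trop_ereal (e l) \<le> trop_ereal (e j1)"
      unfolding set_vs by (auto simp: rabs_signed trop_ereal_inject)
    then have "e j1 \<noteq> None" "(j1 = i) \<noteq> (j2 = i)"
      by (auto simp: signed_eq_signed_iff)
    then consider "j1 = i" | "j2 = i" by blast
    then show "max_tie_at ms a i"
    proof cases
      case 1
      with j \<open>e j1 \<noteq> None\<close> \<open>(j1 = i) \<noteq> (j2 = i)\<close> show ?thesis
        unfolding max_tie_at_def e_def by (auto simp: tle_iff_trop_ereal)
    next
      case 2
      with j \<open>e j1 \<noteq> None\<close> \<open>(j1 = i) \<noteq> (j2 = i)\<close> show ?thesis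
        unfolding max_tie_at_def e_def by (auto simp: tle_iff_trop_ereal)
    qed
  next
    assume "max_tie_at ms a i"
    then obtain j where j: "j < length ms" "j \<noteq> i" "e j = e i" "e i \<noteq> None"
      "\<forall>l<length ms. trop_ereal (e l) \<le> trop_ereal (e i)"
      unfolding max_tie_at_def e_def tle_iff_trop_ereal by blast
    have "signed False (e i) \<in> set vs"
      unfolding set_vs using assms(2) by (intro image_eqI[of _ _ i]) simp_all
    moreover have "signed True (e j) \<in> set vs"
      unfolding set_vs using j(1,2) by (intro image_eqI[of _ _ j]) simp_all
    moreover have "\<forall>w\<in>set vs. rabs w \<le> rabs (signed False (e i))"
      unfolding set_vs using j(5) by (auto simp: rabs_signed)
    ultimately show "\<exists>x\<in>set vs. \<exists>y\<in>set vs. x \<noteq> y \<and> rabs x = rabs y \<and> (\<forall>w\<in>set vs. rabs w \<le> rabs x)"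
      using j(3,4)
      by (intro bexI[of _ "signed False (e i)"] bexI[of _ "signed True (e j)"])
        (auto simp: signed_eq_signed_iff rabs_signed)
  qed
  ultimately show ?thesis
    by (simp add: rzero_mem_hsum_iff)
qed

lemma mem_tropV_iff:
  "a \<in> tropV n ms \<longleftrightarrow> length a = n \<and>
    ((\<forall>j<length ms. mono_eval (ms ! j) a = None) \<or> (\<exists>i<length ms. max_tie_at ms a i))"
proof -
  define e where "e j = mono_eval (ms ! j) a" for j
  have "(\<forall>j<length ms. e j = None) \<or> (\<exists>i<length ms. max_tie_at ms a i)"
    if "i < length ms" "j < length ms" "i \<noteq> j" "e i = e j" "\<forall>l<length ms. tle (e l) (e i)" for i j
  proof (cases "e i = None")
    case True
    with that(5) show ?thesis by (simp add: tle_None_iff)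
  next
    case False
    with that show ?thesis unfolding max_tie_at_def e_def by auto
  qed
  moreover have "\<exists>j<length ms. i \<noteq> j \<and> e i = e j \<and> (\<forall>l<length ms. tle (e l) (e i))"
    if "max_tie_at ms a i" for i
    using that unfolding max_tie_at_def e_def by auto
  ultimately show ?thesis
    unfolding tropV_def e_def by blast
qed

lemma phi_mem_HV_iff:
  assumes "ms \<noteq> []" "\<forall>j < length ms. length (snd (ms ! j)) = length a"
  shows "phi a \<in> HV (length a) ms \<longleftrightarrow> a \<in> tropV (length a) ms"
proof -
  let ?all_none = "\<forall>j<length ms. mono_eval (ms ! j) a = None"
  have "phi a \<in> HV (length a) ms \<longleftrightarrow> (\<exists>i<length ms. rzero \<in> reval (ftilde ms i) (phi a))"
    by (auto simp: HV_def RV_def phi_def)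
  also have "\<dots> \<longleftrightarrow> (\<exists>i<length ms. ?all_none \<or> max_tie_at ms a i)"
    using assms(2) by (simp add: rzero_mem_reval_ftilde_phi_iff cong: conj_cong)
  also have "\<dots> \<longleftrightarrow> ?all_none \<or> (\<exists>i<length ms. max_tie_at ms a i)"
    using assms(1) by auto
  also have "\<dots> \<longleftrightarrow> a \<in> tropV (length a) ms"
    by (simp add: mem_tropV_iff)
  finally show ?thesis .
qed

text \<open>The distinctness of the multi-indices is not needed.\<close>
theorem proposition4p14:
  fixes n :: nat and ms :: "(real \<times> nat list) list"
  assumes "length ms \<ge> 1"
    and "\<forall>i < length ms. length (snd (ms ! i)) = n"
    and "distinct (map snd ms)"
  shows "phi ` tropV n ms = HV n ms \<inter> phi ` {a :: real option list. length a = n}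
         \<and> bij_betw phi (tropV n ms) (HV n ms \<inter> phi ` {a :: real option list. length a = n})"
proof -
  have "ms \<noteq> []" using assms(1) by auto
  have tropV: "a \<in> tropV n ms \<longleftrightarrow> length a = n \<and> phi a \<in> HV n ms" for a
  proof (cases "length a = n")
    case True
    with phi_mem_HV_iff[OF \<open>ms \<noteq> []\<close>, of a] assms(2) show ?thesis by auto
  next
    case False
    then show ?thesis by (simp add: tropV_def)
  qed
  then have image: "phi ` tropV n ms = HV n ms \<inter> phi ` {a. length a = n}"
    by auto
  moreover have "bij_betw phi (tropV n ms) (HV n ms \<inter> phi ` {a. length a = n})"
    unfolding bij_betw_def image using inj_on_subset[OF inj_phi] by simp
  ultimately show ?thesis by simp
qed

end
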